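(* For every $(s,a)\in\mathcal{S}\times\mathcal{A}$, the map $\pi\mapsto d^\pi(s,a)$ is $L$-Lipschitz on $\Pi$ with $L=\frac{|\mathcal{A}|}{(1-\gamma)^2}$, i.e. $|d^{\pi'}(s,a)-d^\pi(s,a)|\le\frac{|\mathcal{A}|}{(1-\gamma)^2}\|\pi'-\pi\|_2$ for all $\pi,\pi'\in\Pi$.
   Context: Finite MDP with finite state space $\mathcal{S}$, finite action space $\mathcal{A}$, transition kernel $P$, discount $\gamma\in[0,1)$, initial distribution $\mu\in\Delta_{\mathcal{S}}$. $\Pi$: stationary randomized policies, viewed as vectors $(\pi(a|s))_{s,a}\in\mathbb{R}^{\mathcal{S}\times\mathcal{A}}$ with Euclidean norm $\|\cdot\|_2$; $P^\pi(s'|s)=\sum_a\pi(a|s)P(s'|s,a)$. Occupancy: $d^\pi=\mu^\top(I-\gamma P^\pi)^{-1}$, $d^\pi(s,a)=d^\pi(s)\pi(a|s)$. *)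

theory Defs
  imports "HOL-Analysis.Analysis"
begin

(* Finite MDP: states 's, actions 'a (finite types).
   Transition kernel P s a s' = P(s'|s,a); policy \<pi> s a = \<pi>(a|s). *)

definition is_kernel :: "('s::finite \<Rightarrow> 'a::finite \<Rightarrow> 's \<Rightarrow> real) \<Rightarrow> bool" where
  "is_kernel P \<longleftrightarrow> (\<forall>s a. (\<forall>s'. 0 \<le> P s a s') \<and> (\<Sum>s'\<in>UNIV. P s a s') = 1)"

definition is_distribution :: "('s::finite \<Rightarrow> real) \<Rightarrow> bool" where
  "is_distribution \<mu> \<longleftrightarrow> (\<forall>s. 0 \<le> \<mu> s) \<and> (\<Sum>s\<in>UNIV. \<mu> s) = 1"

definition is_policy :: "('s::finite \<Rightarrow> 'a::finite \<Rightarrow> real) \<Rightarrow> bool" where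
  "is_policy \<pi> \<longleftrightarrow> (\<forall>s. (\<forall>a. 0 \<le> \<pi> s a) \<and> (\<Sum>a\<in>UNIV. \<pi> s a) = 1)"

definition P_pi :: "('s::finite \<Rightarrow> 'a::finite \<Rightarrow> 's \<Rightarrow> real) \<Rightarrow> ('s \<Rightarrow> 'a \<Rightarrow> real) \<Rightarrow> real^'s^'s" where
  "P_pi P \<pi> = (\<chi> s s'. \<Sum>a\<in>UNIV. \<pi> s a * P s a s')"

definition state_occ :: "('s::finite \<Rightarrow> real) \<Rightarrow> ('s \<Rightarrow> 'a::finite \<Rightarrow> 's \<Rightarrow> real) \<Rightarrow> real
     \<Rightarrow> ('s \<Rightarrow> 'a \<Rightarrow> real) \<Rightarrow> real^'s" where
  "state_occ \<mu> P \<gamma> \<pi> = (\<chi> s. \<mu> s) v* matrix_inv (mat 1 - \<gamma> *\<^sub>R P_pi P \<pi>)"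

definition occ :: "('s::finite \<Rightarrow> real) \<Rightarrow> ('s \<Rightarrow> 'a::finite \<Rightarrow> 's \<Rightarrow> real) \<Rightarrow> real
     \<Rightarrow> ('s \<Rightarrow> 'a \<Rightarrow> real) \<Rightarrow> 's \<Rightarrow> 'a \<Rightarrow> real" where
  "occ \<mu> P \<gamma> \<pi> s a = state_occ \<mu> P \<gamma> \<pi> $ s * \<pi> s a"

definition policy_dist :: "('s::finite \<Rightarrow> 'a::finite \<Rightarrow> real) \<Rightarrow> ('s \<Rightarrow> 'a \<Rightarrow> real) \<Rightarrow> real" where
  "policy_dist \<pi>' \<pi> = sqrt (\<Sum>(s,a)\<in>UNIV. (\<pi>' s a - \<pi> s a)\<^sup>2)"

end

theory Submission
  imports Defs
begin

text \<open>Write \<open>M = I - \<gamma> P\<^sup>\<pi>\<close>. As \<open>P\<^sup>\<pi>\<close> is row-stochastic, \<open>x M = y\<close> forces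
  \<open>(1 - \<gamma>) |x|\<^sub>1 \<le> |y|\<^sub>1\<close>, so \<open>M\<close> is invertible and \<open>|d\<^sup>\<pi>|\<^sub>1 \<le> 1 / (1 - \<gamma>)\<close>.
  For \<open>d = d\<^sup>\<pi>\<close> and \<open>d' = d\<^sup>\<pi>\<^sup>'\<close>, subtracting \<open>d M = \<mu> = d' M'\<close> gives
  \<open>(d' - d) M' = \<gamma> d (P\<^sup>\<pi>\<^sup>' - P\<^sup>\<pi>)\<close>, and every row of \<open>P\<^sup>\<pi>\<^sup>' - P\<^sup>\<pi>\<close> has \<open>\<ell>\<^sub>1\<close>-norm at most
  \<open>|\<A>| D\<close> with \<open>D = \<parallel>\<pi>' - \<pi>\<parallel>\<^sub>2\<close>; hence \<open>|d' - d|\<^sub>1 \<le> \<gamma> |\<A>| D / (1 - \<gamma>)\<^sup>2\<close>. Finally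
  \<open>d' \<pi>' - d \<pi> = (d' - d) \<pi>' + d (\<pi>' - \<pi>)\<close> with \<open>0 \<le> \<pi>' \<le> 1\<close> bounds the error by
  \<open>\<gamma> |\<A>| D / (1 - \<gamma>)\<^sup>2 + D / (1 - \<gamma>) \<le> |\<A>| D / (1 - \<gamma>)\<^sup>2\<close>.\<close>

definition l1_norm :: "real^'n \<Rightarrow> real" where
  "l1_norm x = (\<Sum>j\<in>UNIV. \<bar>x $ j\<bar>)"

definition stochastic_matrix :: "real^'n^'n \<Rightarrow> bool" where
  "stochastic_matrix Q \<longleftrightarrow> (\<forall>i j. 0 \<le> Q $ i $ j) \<and> (\<forall>i. (\<Sum>j\<in>UNIV. Q $ i $ j) = 1)"

lemma l1_norm_nonneg: "0 \<le> l1_norm x"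
  unfolding l1_norm_def by (simp add: sum_nonneg)

lemma abs_nth_le_l1_norm: "\<bar>x $ j\<bar> \<le> l1_norm x"
  unfolding l1_norm_def by (rule member_le_sum) auto

lemma l1_norm_eq_0_iff: "l1_norm x = 0 \<longleftrightarrow> x = 0"
  unfolding l1_norm_def by (simp add: sum_nonneg_eq_0_iff vec_eq_iff)

lemma l1_norm_triangle: "l1_norm (x + y) \<le> l1_norm x + l1_norm y"
  unfolding l1_norm_def by (simp add: sum.distrib[symmetric] sum_mono abs_triangle_ineq)

lemma l1_norm_scaleR: "l1_norm (c *\<^sub>R x) = \<bar>c\<bar> * l1_norm x"
  unfolding l1_norm_def by (simp add: abs_mult sum_distrib_left)

lemma l1_norm_vector_matrix_mult_le:
  fixes Q :: "real^'m^'n"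
  assumes "\<And>i. l1_norm (Q $ i) \<le> c"
  shows "l1_norm (x v* Q) \<le> c * l1_norm x"
proof -
  have "\<bar>(x v* Q) $ j\<bar> \<le> (\<Sum>i\<in>UNIV. \<bar>x $ i\<bar> * \<bar>Q $ i $ j\<bar>)" for j
    unfolding vector_matrix_mult_def by (simp add: order_trans[OF sum_abs] abs_mult)
  then have "l1_norm (x v* Q) \<le> (\<Sum>j\<in>UNIV. \<Sum>i\<in>UNIV. \<bar>x $ i\<bar> * \<bar>Q $ i $ j\<bar>)"
    unfolding l1_norm_def by (rule sum_mono)
  also have "\<dots> = (\<Sum>i\<in>UNIV. \<bar>x $ i\<bar> * l1_norm (Q $ i))"
    unfolding l1_norm_def by (subst sum.swap) (simp add: sum_distrib_left)
  also have "\<dots> \<le> (\<Sum>i\<in>UNIV. c * \<bar>x $ i\<bar>)"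
    by (intro sum_mono) (metis assms abs_ge_zero mult.commute mult_left_mono)
  finally show ?thesis
    by (simp add: l1_norm_def sum_distrib_left)
qed

lemma l1_norm_stochastic_row:
  assumes "stochastic_matrix Q"
  shows "l1_norm (Q $ i) = 1"
  using assms unfolding stochastic_matrix_def l1_norm_def by simp

lemma l1_norm_le_resolvent:
  assumes "stochastic_matrix Q" and "0 \<le> \<gamma>"
  shows "(1 - \<gamma>) * l1_norm x \<le> l1_norm (x v* (mat 1 - \<gamma> *\<^sub>R Q))"
proof -
  have "x = x v* (mat 1 - \<gamma> *\<^sub>R Q) + \<gamma> *\<^sub>R (x v* Q)"
    by (simp add: vector_matrix_mult_diff_rdistrib vector_scaleR_matrix_ac)
  then have "l1_norm x \<le> l1_norm (x v* (mat 1 - \<gamma> *\<^sub>R Q)) + \<gamma> * l1_norm (x v* Q)"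
    by (metis l1_norm_triangle l1_norm_scaleR abs_of_nonneg assms(2))
  moreover have "l1_norm (x v* Q) \<le> l1_norm x"
    using l1_norm_vector_matrix_mult_le[of Q 1 x] l1_norm_stochastic_row[OF assms(1)] by simp
  ultimately show ?thesis
    using mult_left_mono[OF _ assms(2)] by (fastforce simp: algebra_simps)
qed

lemma invertible_resolvent:
  assumes "stochastic_matrix Q" and "0 \<le> \<gamma>" and "\<gamma> < 1"
  shows "invertible (mat 1 - \<gamma> *\<^sub>R Q)"
proof -
  let ?M = "mat 1 - \<gamma> *\<^sub>R Q"
  have "x = 0" if "transpose ?M *v x = 0" for x
  proof -
    have "(1 - \<gamma>) * l1_norm x \<le> 0"
      using l1_norm_le_resolvent[OF assms(1,2), of x] that by (simp add: l1_norm_def)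
    then show "x = 0"
      using assms(3) l1_norm_nonneg[of x] l1_norm_eq_0_iff[of x]
      by (simp add: mult_le_0_iff)
  qed
  then obtain B where "B ** transpose ?M = mat 1"
    using matrix_left_invertible_ker by blast
  then have "invertible (transpose ?M)"
    using invertible_left_inverse by blast
  then show ?thesis
    using transpose_invertible by fastforce
qed

lemma matrix_inv_left:
  assumes "invertible A"
  shows "matrix_inv A ** A = mat 1"
  using someI_ex[OF assms[unfolded invertible_def]] unfolding matrix_inv_def by blast

lemma stochastic_P_pi:
  assumes "is_kernel P" and "is_policy \<pi>"
  shows "stochastic_matrix (P_pi P \<pi>)"
proof -
  have "(\<Sum>j\<in>UNIV. \<Sum>a\<in>UNIV. \<pi> s a * P s a j) = (\<Sum>a\<in>UNIV. \<pi> s a * (\<Sum>j\<in>UNIV. P s a j))" for s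
    by (subst sum.swap) (simp add: sum_distrib_left)
  then show ?thesis
    using assms unfolding stochastic_matrix_def is_kernel_def is_policy_def P_pi_def
    by (auto intro!: sum_nonneg)
qed

lemma P_pi_diff: "P_pi P \<pi>' - P_pi P \<pi> = P_pi P (\<lambda>s a. \<pi>' s a - \<pi> s a)"
  unfolding P_pi_def by (simp add: vec_eq_iff left_diff_distrib sum_subtractf)

lemma l1_norm_P_pi_row_le:
  fixes P :: "'s::finite \<Rightarrow> 'a::finite \<Rightarrow> 's \<Rightarrow> real"
  assumes "is_kernel P" and "\<And>a. \<bar>\<delta> s a\<bar> \<le> c"
  shows "l1_norm (P_pi P \<delta> $ s) \<le> real CARD('a) * c"
proof -
  have P_nonneg: "0 \<le> P s a j" for a j
    using assms(1) unfolding is_kernel_def by simp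
  have "\<bar>P_pi P \<delta> $ s $ j\<bar> \<le> (\<Sum>a\<in>UNIV. \<bar>\<delta> s a\<bar> * P s a j)" for j
    unfolding P_pi_def by (simp add: order_trans[OF sum_abs] abs_mult P_nonneg)
  then have "l1_norm (P_pi P \<delta> $ s) \<le> (\<Sum>j\<in>UNIV. \<Sum>a\<in>UNIV. \<bar>\<delta> s a\<bar> * P s a j)"
    unfolding l1_norm_def by (rule sum_mono)
  also have "\<dots> = (\<Sum>a\<in>UNIV. \<bar>\<delta> s a\<bar>)"
    using assms(1) unfolding is_kernel_def by (subst sum.swap) (simp add: sum_distrib_left[symmetric])
  also have "\<dots> \<le> (\<Sum>a\<in>(UNIV::'a set). c)"
    by (rule sum_mono) (rule assms(2))
  finally show ?thesis by simp
qed

lemma policy_nonneg: "is_policy \<pi> \<Longrightarrow> 0 \<le> \<pi> s a"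
  unfolding is_policy_def by simp

lemma policy_le_one:
  assumes "is_policy \<pi>"
  shows "\<pi> s a \<le> 1"
proof -
  have "\<pi> s a \<le> (\<Sum>b\<in>UNIV. \<pi> s b)"
    using assms by (intro member_le_sum) (auto simp: policy_nonneg)
  then show ?thesis
    using assms unfolding is_policy_def by simp
qed

lemma policy_dist_nonneg: "0 \<le> policy_dist \<pi>' \<pi>"
  unfolding policy_dist_def by (simp add: case_prod_beta sum_nonneg)

lemma abs_diff_le_policy_dist: "\<bar>\<pi>' s a - \<pi> s a\<bar> \<le> policy_dist \<pi>' \<pi>"
proof -
  have "(\<pi>' s a - \<pi> s a)\<^sup>2 \<le> (\<Sum>(s, a)\<in>UNIV. (\<pi>' s a - \<pi> s a)\<^sup>2)"
    using member_le_sum[of "(s, a)" UNIV "\<lambda>(s, a). (\<pi>' s a - \<pi> s a)\<^sup>2"]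
    by (auto split: prod.splits)
  then show ?thesis
    unfolding policy_dist_def using real_sqrt_le_mono by fastforce
qed

lemma state_occ_resolvent:
  assumes "is_kernel P" and "is_policy \<pi>" and "0 \<le> \<gamma>" and "\<gamma> < 1"
  shows "state_occ \<mu> P \<gamma> \<pi> v* (mat 1 - \<gamma> *\<^sub>R P_pi P \<pi>) = (\<chi> s. \<mu> s)"
  using matrix_inv_left[OF invertible_resolvent[OF stochastic_P_pi[OF assms(1,2)] assms(3,4)]]
  unfolding state_occ_def by (simp add: vector_matrix_mul_assoc)

lemma l1_norm_state_occ_le:
  assumes "is_kernel P" and "is_distribution \<mu>" and "is_policy \<pi>" and "0 \<le> \<gamma>" and "\<gamma> < 1"
  shows "l1_norm (state_occ \<mu> P \<gamma> \<pi>) \<le> 1 / (1 - \<gamma>)"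
proof -
  have "(1 - \<gamma>) * l1_norm (state_occ \<mu> P \<gamma> \<pi>) \<le> l1_norm (\<chi> s. \<mu> s)"
    using l1_norm_le_resolvent[OF stochastic_P_pi[OF assms(1,3)] assms(4)]
    by (metis state_occ_resolvent assms(1,3-5))
  also have "\<dots> = 1"
    using assms(2) unfolding is_distribution_def l1_norm_def by simp
  finally show ?thesis
    using assms(5) by (simp add: field_simps)
qed

lemma state_occ_diff_resolvent:
  assumes "is_kernel P" and "is_policy \<pi>" and "is_policy \<pi>'" and "0 \<le> \<gamma>" and "\<gamma> < 1"
  shows "(state_occ \<mu> P \<gamma> \<pi>' - state_occ \<mu> P \<gamma> \<pi>) v* (mat 1 - \<gamma> *\<^sub>R P_pi P \<pi>')
    = \<gamma> *\<^sub>R (state_occ \<mu> P \<gamma> \<pi> v* (P_pi P \<pi>' - P_pi P \<pi>))"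
proof -
  let ?d = "state_occ \<mu> P \<gamma> \<pi>" and ?d' = "state_occ \<mu> P \<gamma> \<pi>'"
  have "?d' v* (mat 1 - \<gamma> *\<^sub>R P_pi P \<pi>') = ?d v* (mat 1 - \<gamma> *\<^sub>R P_pi P \<pi>)"
    using state_occ_resolvent assms by metis
  then show ?thesis
    by (simp add: algebra_simps vector_scaleR_matrix_ac)
qed

lemma l1_norm_state_occ_diff_le:
  fixes P :: "'s::finite \<Rightarrow> 'a::finite \<Rightarrow> 's \<Rightarrow> real"
  assumes "is_kernel P" and "is_distribution \<mu>" and "is_policy \<pi>" and "is_policy \<pi>'"
    and "0 \<le> \<gamma>" and "\<gamma> < 1"
  shows "l1_norm (state_occ \<mu> P \<gamma> \<pi>' - state_occ \<mu> P \<gamma> \<pi>)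
    \<le> \<gamma> * real CARD('a) * policy_dist \<pi>' \<pi> / (1 - \<gamma>)\<^sup>2"
proof -
  let ?d = "state_occ \<mu> P \<gamma> \<pi>" and ?d' = "state_occ \<mu> P \<gamma> \<pi>'"
  let ?c = "real CARD('a) * policy_dist \<pi>' \<pi>"
  have rows: "l1_norm ((P_pi P \<pi>' - P_pi P \<pi>) $ s) \<le> ?c" for s
    unfolding P_pi_diff by (rule l1_norm_P_pi_row_le[OF assms(1) abs_diff_le_policy_dist])
  have "(1 - \<gamma>) * l1_norm (?d' - ?d) \<le> l1_norm (\<gamma> *\<^sub>R (?d v* (P_pi P \<pi>' - P_pi P \<pi>)))"
    using l1_norm_le_resolvent[OF stochastic_P_pi[OF assms(1,4)] assms(5)]
    by (metis state_occ_diff_resolvent assms(1,3-6))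
  also have "\<dots> \<le> \<gamma> * (?c * l1_norm ?d)"
    using l1_norm_vector_matrix_mult_le[OF rows] assms(5)
    by (simp add: l1_norm_scaleR mult_left_mono)
  also have "\<dots> \<le> \<gamma> * (?c * (1 / (1 - \<gamma>)))"
    using l1_norm_state_occ_le[OF assms(1-3,5,6)] assms(5)
    by (intro mult_left_mono) (auto simp: policy_dist_nonneg)
  finally have "(1 - \<gamma>) * l1_norm (?d' - ?d) \<le> \<gamma> * ?c / (1 - \<gamma>)"
    by simp
  then have "l1_norm (?d' - ?d) \<le> \<gamma> * ?c / (1 - \<gamma>) / (1 - \<gamma>)"
    using assms(6) by (simp add: pos_le_divide_eq mult.commute)
  then show ?thesis
    by (simp add: power2_eq_square mult.assoc)
qed

lemma abs_occ_diff_le: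
  assumes "is_policy \<pi>'"
  shows "\<bar>occ \<mu> P \<gamma> \<pi>' s a - occ \<mu> P \<gamma> \<pi> s a\<bar>
    \<le> \<bar>(state_occ \<mu> P \<gamma> \<pi>' - state_occ \<mu> P \<gamma> \<pi>) $ s\<bar> + \<bar>state_occ \<mu> P \<gamma> \<pi> $ s\<bar> * policy_dist \<pi>' \<pi>"
proof -
  let ?d = "state_occ \<mu> P \<gamma> \<pi>" and ?d' = "state_occ \<mu> P \<gamma> \<pi>'"
  have "occ \<mu> P \<gamma> \<pi>' s a - occ \<mu> P \<gamma> \<pi> s a = (?d' - ?d) $ s * \<pi>' s a + ?d $ s * (\<pi>' s a - \<pi> s a)"
    unfolding occ_def by (simp add: algebra_simps)
  then have "\<bar>occ \<mu> P \<gamma> \<pi>' s a - occ \<mu> P \<gamma> \<pi> s a\<bar>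
      \<le> \<bar>(?d' - ?d) $ s * \<pi>' s a\<bar> + \<bar>?d $ s * (\<pi>' s a - \<pi> s a)\<bar>"
    by (metis abs_triangle_ineq)
  also have "\<dots> \<le> \<bar>(?d' - ?d) $ s\<bar> + \<bar>?d $ s\<bar> * policy_dist \<pi>' \<pi>"
    using policy_nonneg[OF assms] policy_le_one[OF assms]
    by (intro add_mono) (simp_all add: abs_mult mult_left_le mult_left_mono abs_diff_le_policy_dist)
  finally show ?thesis .
qed

theorem proposition4:
  fixes P :: "'s::finite \<Rightarrow> 'a::finite \<Rightarrow> 's \<Rightarrow> real"
    and \<mu> :: "'s \<Rightarrow> real" and \<gamma> :: real
    and \<pi> \<pi>' :: "'s \<Rightarrow> 'a \<Rightarrow> real"
  assumes "is_kernel P" and "is_distribution \<mu>"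
    and "0 \<le> \<gamma>" and "\<gamma> < 1"
    and "is_policy \<pi>" and "is_policy \<pi>'"
  shows "\<bar>occ \<mu> P \<gamma> \<pi>' s a - occ \<mu> P \<gamma> \<pi> s a\<bar>
           \<le> real CARD('a) / (1 - \<gamma>)\<^sup>2 * policy_dist \<pi>' \<pi>"
proof -
  define d where "d = state_occ \<mu> P \<gamma> \<pi>"
  define d' where "d' = state_occ \<mu> P \<gamma> \<pi>'"
  define A where "A = real CARD('a)"
  define D where "D = policy_dist \<pi>' \<pi>"
  have diff_bound: "\<bar>(d' - d) $ s\<bar> \<le> \<gamma> * A * D / (1 - \<gamma>)\<^sup>2"
    unfolding d_def d'_def A_def D_def
    by (rule order_trans[OF abs_nth_le_l1_norm l1_norm_state_occ_diff_le[OF assms(1,2,5,6,3,4)]])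
  have occ_bound: "\<bar>d $ s\<bar> \<le> 1 / (1 - \<gamma>)"
    unfolding d_def by (rule order_trans[OF abs_nth_le_l1_norm l1_norm_state_occ_le[OF assms(1,2,5,3,4)]])
  have "\<bar>occ \<mu> P \<gamma> \<pi>' s a - occ \<mu> P \<gamma> \<pi> s a\<bar> \<le> \<bar>(d' - d) $ s\<bar> + \<bar>d $ s\<bar> * D"
    unfolding d_def d'_def D_def by (rule abs_occ_diff_le[OF assms(6)])
  also have "\<dots> \<le> \<gamma> * A * D / (1 - \<gamma>)\<^sup>2 + 1 / (1 - \<gamma>) * D"
    using diff_bound occ_bound policy_dist_nonneg unfolding D_def
    by (intro add_mono mult_right_mono) simp_all
  also have "\<dots> = (\<gamma> * (A * D) + (1 - \<gamma>) * D) / (1 - \<gamma>)\<^sup>2"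
    using assms(4) by (simp add: power2_eq_square add_divide_distrib)
  also have "\<dots> \<le> (\<gamma> * (A * D) + (1 - \<gamma>) * (A * D)) / (1 - \<gamma>)\<^sup>2"
    using assms(4) policy_dist_nonneg[of \<pi>' \<pi>] unfolding A_def D_def
    by (intro divide_right_mono add_left_mono mult_left_mono) (simp_all add: mult_le_cancel_right1)
  also have "\<dots> = A / (1 - \<gamma>)\<^sup>2 * D"
    by (simp add: algebra_simps)
  finally show ?thesis
    unfolding A_def D_def .
qed

end
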